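(* Let $X=[x_{ij}]\in\mathbb{R}^{N_1\times N_2}$ be $k$-sparse. For $i\in\{1,2\}$ let $U_i\in\mathbb{R}^{m_i\times N_i}$ satisfy the NSP$_k$ property. Define $Y=U_1XU_2^T\in\mathbb{R}^{m_1\times m_2}$ and let $y_1,\dots,y_{m_2}\in\mathbb{R}^{m_1}$ be the columns of $Y$. For $i\in[m_2]$ consider $$\hat z_i=\arg\min_{z\in\mathbb{R}^{N_1}}\|z\|_1\quad\text{s.t.}\quad y_i=U_1z .$$ Then each of these problems has a unique solution $\hat z_i$, and $\hat z_i$ is $k$-sparse; moreover, the matrix $Z\in\mathbb{R}^{N_1\times m_2}$ with columns $\hat z_1,\dots,\hat z_{m_2}$ equals $XU_2^T$. Let $w_1^T,\dots,w_{N_1}^T$ be the rows of $Z$ (so $w_j\in\mathbb{R}^{m_2}$). Then for each $j\in[N_1]$ the problem $$\hat v_j=\arg\min_{v\in\mathbb{R}^{N_2}}\|v\|_1\quad\text{s.t.}\quad w_j=U_2v$$ has a unique solution, and $\hat v_j^T$ is the $j$-th row of $X$. In particular $X$ is uniquely recovered from $Y$.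
   Context: A vector or matrix is $k$-sparse if it has at most $k$ nonzero entries. For a positive integer $n$, $[n]=\{1,\dots,n\}$. For $w\in\mathbb{R}^N$ and $S\subset[N]$, $\|w_S\|_1=\sum_{i\in S}|w_i|$ and $S^c=[N]\setminus S$. A matrix $A\in\mathbb{R}^{m\times N}$ satisfies the null space property of order $k$ (NSP$_k$) if for every $w\neq 0$ with $Aw=0$ and every $S\subset[N]$ with $|S|=k$ one has $\|w_S\|_1<\|w_{S^c}\|_1$. *)

theory Defs
  imports "HOL-Analysis.Analysis"
begin

definition l1norm :: "real ^ 'n \<Rightarrow> real" where
  "l1norm w = (\<Sum>i\<in>UNIV. \<bar>w $ i\<bar>)"

definition sparse_vec :: "nat \<Rightarrow> real ^ 'n \<Rightarrow> bool" where
  "sparse_vec k x \<longleftrightarrow> card {i. x $ i \<noteq> 0} \<le> k"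

definition sparse_mat :: "nat \<Rightarrow> real ^ 'c ^ 'r \<Rightarrow> bool" where
  "sparse_mat k X \<longleftrightarrow> card {(i, j). X $ i $ j \<noteq> 0} \<le> k"

definition NSP :: "nat \<Rightarrow> real ^ 'n ^ 'm \<Rightarrow> bool" where
  "NSP k A \<longleftrightarrow> (\<forall>w. w \<noteq> 0 \<and> A *v w = 0 \<longrightarrow>
      (\<forall>S::'n set. card S = k \<longrightarrow>
         (\<Sum>i\<in>S. \<bar>w $ i\<bar>) < (\<Sum>i\<in>-S. \<bar>w $ i\<bar>)))"

definition l1_min :: "real ^ 'n ^ 'm \<Rightarrow> real ^ 'm \<Rightarrow> real ^ 'n \<Rightarrow> bool" where
  "l1_min A y z \<longleftrightarrow> A *v z = y \<and> (\<forall>z'. A *v z' = y \<longrightarrow> l1norm z \<le> l1norm z')"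

end

theory Submission
  imports Defs
begin

(* The whole argument rests on the classical consequence of the null space
   property: if A satisfies NSP_k and x is k-sparse, then every other z with
   A z = A x has strictly larger l1 norm (lemma nsp_sparse_strict_l1).  Hence x
   is the unique l1 minimiser for the data A x (nsp_l1_min_unique), and A is
   injective on k-sparse vectors (nsp_sparse_inj).

   For the matrix problem we use that the columns of X U2^T and the rows of X
   are k-sparse whenever X is (column_mult_sparse, row_sparse), and that
   column i (U1 X U2^T) = U1 (column i (X U2^T)) and
   row j (X U2^T) = U2 (row j X) (column_mult, row_mult_transpose).
   Stage one therefore recovers Z = X U2^T column by column, stage two recovers
   X row by row, and the same two steps show that X is determined by Y among
   k-sparse matrices (sparse_two_stage_inj). *)

lemma l1norm_split:
  fixes w :: "real ^ 'n"
  shows "l1norm w = (\<Sum>i\<in>S. \<bar>w $ i\<bar>) + (\<Sum>i\<in>-S. \<bar>w $ i\<bar>)"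
proof -
  have "(\<Sum>i\<in>S \<union> -S. \<bar>w $ i\<bar>) = (\<Sum>i\<in>S. \<bar>w $ i\<bar>) + (\<Sum>i\<in>-S. \<bar>w $ i\<bar>)"
    by (rule sum.union_disjoint) auto
  thus ?thesis by (simp add: l1norm_def)
qed

text \<open>The support of a k-sparse vector lies in a set of exactly k coordinates,
  which is the form in which the NSP can be applied to it.\<close>
lemma sparse_support_in_card_set:
  fixes x :: "real ^ 'n"
  assumes "sparse_vec k x" "k \<le> CARD('n)"
  obtains S where "card S = k" "\<And>i. i \<notin> S \<Longrightarrow> x $ i = 0"
proof -
  have "card {i. x $ i \<noteq> 0} \<le> k" using assms(1) by (simp add: sparse_vec_def)
  then obtain S where "{i. x $ i \<noteq> 0} \<subseteq> S" "card S = k"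
    using exists_subset_between[of "{i. x $ i \<noteq> 0}" k "UNIV :: 'n set"] assms(2) by auto
  show ?thesis
  proof (rule that)
    show "card S = k" by fact
    show "x $ i = 0" if "i \<notin> S" for i using \<open>{i. x $ i \<noteq> 0} \<subseteq> S\<close> that by blast
  qed
qed

text \<open>Write z = x + w with A w = 0;
  on the support set S of x the norm drops by at most the l1 mass of w on S,
  while off S it gains the (strictly larger) mass of w on the complement.\<close>
lemma nsp_sparse_strict_l1:
  fixes A :: "real ^ 'n ^ 'm" and x z :: "real ^ 'n"
  assumes nsp: "NSP k A" and "k \<le> CARD('n)" and "sparse_vec k x"
    and same: "A *v z = A *v x" and "z \<noteq> x"
  shows "l1norm x < l1norm z"
proof -
  define w where "w = z - x"
  have "w \<noteq> 0" using \<open>z \<noteq> x\<close> by (simp add: w_def)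
  moreover have "A *v w = 0" using same by (simp add: w_def matrix_vector_mult_diff_distrib)
  moreover obtain S where "card S = k" and off_S: "\<And>i. i \<notin> S \<Longrightarrow> x $ i = 0"
    using sparse_support_in_card_set[OF \<open>sparse_vec k x\<close> \<open>k \<le> CARD('n)\<close>] by blast
  ultimately have nsp_S: "(\<Sum>i\<in>S. \<bar>w $ i\<bar>) < (\<Sum>i\<in>-S. \<bar>w $ i\<bar>)"
    using nsp unfolding NSP_def by blast
  have z_eq: "z = x + w" by (simp add: w_def)
  have "l1norm x = (\<Sum>i\<in>S. \<bar>x $ i\<bar>)"
    using l1norm_split[of x S] off_S by simp
  also have "\<dots> = (\<Sum>i\<in>S. \<bar>x $ i\<bar> - \<bar>w $ i\<bar>) + (\<Sum>i\<in>S. \<bar>w $ i\<bar>)"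
    by (simp add: sum_subtractf)
  also have "\<dots> < (\<Sum>i\<in>S. \<bar>z $ i\<bar>) + (\<Sum>i\<in>-S. \<bar>w $ i\<bar>)"
    using nsp_S by (intro add_le_less_mono sum_mono) (auto simp: z_eq)
  also have "(\<Sum>i\<in>-S. \<bar>w $ i\<bar>) = (\<Sum>i\<in>-S. \<bar>z $ i\<bar>)"
    using off_S by (intro sum.cong) (auto simp: z_eq)
  also have "(\<Sum>i\<in>S. \<bar>z $ i\<bar>) + \<dots> = l1norm z"
    by (rule l1norm_split[symmetric])
  finally show ?thesis .
qed

lemma nsp_l1_min_iff:
  fixes A :: "real ^ 'n ^ 'm" and x z :: "real ^ 'n"
  assumes "NSP k A" "k \<le> CARD('n)" "sparse_vec k x"
  shows "l1_min A (A *v x) z \<longleftrightarrow> z = x"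
proof
  assume min: "l1_min A (A *v x) z"
  show "z = x"
  proof (rule ccontr)
    assume "z \<noteq> x"
    hence "l1norm x < l1norm z" using nsp_sparse_strict_l1[OF assms] min by (auto simp: l1_min_def)
    thus False using min by (auto simp: l1_min_def)
  qed
next
  assume "z = x"
  thus "l1_min A (A *v x) z"
    using nsp_sparse_strict_l1[OF assms] by (force simp: l1_min_def)
qed

lemma nsp_l1_min_unique:
  fixes A :: "real ^ 'n ^ 'm" and x :: "real ^ 'n"
  assumes "NSP k A" "k \<le> CARD('n)" "sparse_vec k x"
  shows "(\<exists>!z. l1_min A (A *v x) z) \<and> (THE z. l1_min A (A *v x) z) = x"
  using nsp_l1_min_iff[OF assms] by auto

lemma nsp_sparse_inj:
  fixes A :: "real ^ 'n ^ 'm" and x y :: "real ^ 'n"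
  assumes "NSP k A" "k \<le> CARD('n)" "sparse_vec k x" "sparse_vec k y"
    and "A *v y = A *v x"
  shows "y = x"
  using nsp_sparse_strict_l1[OF assms(1,2,3,5)] nsp_sparse_strict_l1[OF assms(1,2,4) assms(5)[symmetric]]
  by fastforce

text \<open>Every column of X B is k-sparse when X is: a nonzero entry in row j of
  X B needs a nonzero entry in row j of X, so the support projects into the
  rows of the support of X.\<close>
lemma column_mult_sparse:
  fixes X :: "real ^ 'c ^ 'r" and B :: "real ^ 'd ^ 'c"
  assumes "sparse_mat k X"
  shows "sparse_vec k (column i (X ** B))"
proof -
  have "{j. column i (X ** B) $ j \<noteq> 0} \<subseteq> fst ` {(a, b). X $ a $ b \<noteq> 0}"
  proof
    fix j assume "j \<in> {j. column i (X ** B) $ j \<noteq> 0}"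
    hence "(\<Sum>l\<in>UNIV. X $ j $ l * B $ l $ i) \<noteq> 0"
      by (simp add: column_def matrix_matrix_mult_def)
    then obtain l where "X $ j $ l \<noteq> 0" by (metis (no_types, lifting) mult_eq_0_iff sum.neutral)
    thus "j \<in> fst ` {(a, b). X $ a $ b \<noteq> 0}" by force
  qed
  hence "card {j. column i (X ** B) $ j \<noteq> 0} \<le> card (fst ` {(a, b). X $ a $ b \<noteq> 0})"
    by (intro card_mono) auto
  also have "\<dots> \<le> card {(a, b). X $ a $ b \<noteq> 0}" by (intro card_image_le) auto
  finally show ?thesis using assms by (simp add: sparse_vec_def sparse_mat_def)
qed

lemma row_sparse:
  fixes X :: "real ^ 'c ^ 'r"
  assumes "sparse_mat k X"
  shows "sparse_vec k (row j X)"
proof -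
  have "{l. row j X $ l \<noteq> 0} = snd ` (Pair j ` {l. row j X $ l \<noteq> 0})" by force
  also have "card \<dots> \<le> card (Pair j ` {l. row j X $ l \<noteq> 0})" by (intro card_image_le) auto
  also have "\<dots> \<le> card {(a, b). X $ a $ b \<noteq> 0}" by (intro card_mono) (auto simp: row_def)
  finally show ?thesis using assms by (simp add: sparse_vec_def sparse_mat_def)
qed

lemma column_mult: "column i (A ** B) = A *v column i B"
  by (simp add: vec_eq_iff column_def matrix_matrix_mult_def matrix_vector_mult_def)

lemma row_mult_transpose:
  fixes X :: "real ^ 'c ^ 'r" and U :: "real ^ 'c ^ 'm"
  shows "row j (X ** transpose U) = U *v row j X"
  by (simp add: vec_eq_iff row_def transpose_def matrix_matrix_mult_def
      matrix_vector_mult_def mult.commute)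

lemma column_two_sided: "column i (U1 ** X ** transpose U2) = U1 *v column i (X ** transpose U2)"
  by (simp add: column_mult flip: matrix_mul_assoc)

lemma sparse_two_stage_inj:
  fixes X X' :: "real ^ 'N2 ^ 'N1" and U1 :: "real ^ 'N1 ^ 'm1" and U2 :: "real ^ 'N2 ^ 'm2"
  assumes "k \<le> CARD('N1)" "k \<le> CARD('N2)" "NSP k U1" "NSP k U2"
    and sX: "sparse_mat k X" and sX': "sparse_mat k X'"
    and same: "U1 ** X' ** transpose U2 = U1 ** X ** transpose U2"
  shows "X' = X"
proof -
  have "column i (X' ** transpose U2) = column i (X ** transpose U2)" for i
    using arg_cong[OF same, of "column i"]
      nsp_sparse_inj[OF assms(3,1) column_mult_sparse[OF sX] column_mult_sparse[OF sX']]
    unfolding column_two_sided by blast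
  hence middle: "X' ** transpose U2 = X ** transpose U2" by (simp add: vec_eq_iff column_def)
  have "row j X' = row j X" for j
    using arg_cong[OF middle, of "row j"] nsp_sparse_inj[OF assms(4,2) row_sparse[OF sX] row_sparse[OF sX']]
    unfolding row_mult_transpose by blast
  thus ?thesis by (simp add: vec_eq_iff row_def)
qed

theorem mainTheorem1:
  fixes X :: "real ^ 'N2 ^ 'N1"
    and U1 :: "real ^ 'N1 ^ 'm1"
    and U2 :: "real ^ 'N2 ^ 'm2"
    and k :: nat
  assumes "k \<le> CARD('N1)" and "k \<le> CARD('N2)"
    and "sparse_mat k X"
    and "NSP k U1" and "NSP k U2"
  shows "let Y = U1 ** X ** transpose U2;
             zhat = (\<lambda>i::'m2. THE z. l1_min U1 (column i Y) z);
             Z = (\<chi> j i. zhat i $ j)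
         in (\<forall>i. (\<exists>!z. l1_min U1 (column i Y) z) \<and> sparse_vec k (zhat i))
          \<and> Z = X ** transpose U2
          \<and> (\<forall>j. (\<exists>!v. l1_min U2 (row j Z) v)
                 \<and> (THE v. l1_min U2 (row j Z) v) = row j X)
          \<and> (\<forall>X'. sparse_mat k X' \<longrightarrow> U1 ** X' ** transpose U2 = Y \<longrightarrow> X' = X)"
proof -
  define W where "W = X ** transpose U2"
  text \<open>Stage one: column i of Y is U1 applied to the k-sparse column i of W.\<close>
  have stage1: "(\<exists>!z. l1_min U1 (column i (U1 ** X ** transpose U2)) z) \<and>
      (THE z. l1_min U1 (column i (U1 ** X ** transpose U2)) z) = column i W" for i
    unfolding column_two_sided W_def
    using nsp_l1_min_unique[OF assms(4,1) column_mult_sparse[OF assms(3)]] .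
  hence Z_eq: "(\<chi> j i. (THE z. l1_min U1 (column i (U1 ** X ** transpose U2)) z) $ j) = W"
    by (simp add: vec_eq_iff column_def)
  text \<open>Stage two: row j of W is U2 applied to the k-sparse row j of X.\<close>
  have stage2: "(\<exists>!v. l1_min U2 (row j W) v) \<and> (THE v. l1_min U2 (row j W) v) = row j X" for j
    unfolding W_def row_mult_transpose
    using nsp_l1_min_unique[OF assms(5,2) row_sparse[OF assms(3)]] .
  have recovery: "\<forall>X'. sparse_mat k X' \<longrightarrow> U1 ** X' ** transpose U2 = U1 ** X ** transpose U2 \<longrightarrow> X' = X"
    using sparse_two_stage_inj[OF assms(1,2,4,5,3)] by blast
  show ?thesis
    unfolding Let_def Z_eq
    using stage1 stage2 recovery by (simp add: W_def column_mult_sparse[OF assms(3)])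
qed

end
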